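(* Let $u\in W$ and $\lambda\in P^\vee_+$ with $u\lambda\in P^\vee_-$, and suppose $\hat u=u\tau(-\lambda)$ satisfies $\hat uR_+\subset\hat R_+$. Let $\ell$ be such that $R_\ell\cong A_{k_\ell}$ and $h^\ell_\eta=(r_\ell+1)\hbar$. Let $w\in W$ and $\xi\in\Xi_{\vec r}(w)$, and put $m^\ell_0=(w\theta_\ell,\lambda)$, $m^\ell_j=(w\alpha^\ell_j,\lambda)$, $\xi^\ell_j=\xi(w\alpha^\ell_j)$ ($j=1,\dots,k_\ell$). Assume $|\xi|^w_\ell+m^\ell_0\le r_\ell+1$ and $\xi^\ell_j+m^\ell_j\ge0$ for all $j$. Let $\xi_\ell=\xi|_{wS_\ell}$. Then there exist $v_\ell\in W_\ell$ and a map $\tilde\xi_\ell:uwv_\ell S_\ell\to\mathbb Z_{\ge0}$ with $\sum_{\alpha\in uwv_\ell S_\ell}\tilde\xi_\ell(\alpha)\le r_\ell$ and $\tilde\xi_\ell^{-1}(0)\subset R_+$ such that $\hat u\,H_\eta(wS_\ell;\xi_\ell)=H_\eta(uwv_\ell S_\ell;\tilde\xi_\ell)$.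
   Context: $R$ is an irreducible reduced root system in $V=\mathbb C^n$, Weyl group $W$, positive roots $R_+$, simple roots $\Delta$, coweight lattice $P^\vee$ with dominant cone $P^\vee_+=\{\lambda:(\alpha,\lambda)\ge0\ \forall\alpha\in R_+\}$ and antidominant cone $P^\vee_-$. $\hbar\in\mathbb C\setminus\pi i\mathbb Q$, $\hbar\ne0$; $\tau(\lambda)x=x+\hbar\lambda$. Affine functions $[\alpha^{(1)},\alpha^{(0)}]:x\mapsto(\alpha^{(1)},x)+\alpha^{(0)}$; $\hat R=\{[\alpha,\hbar k]:\alpha\in R,k\in\mathbb Z\}$, $\hat R_+=R_+\cup\{[\alpha,\hbar k]:\alpha\in R,k>0\}$ (roots $\alpha\in R$ identified with $[\alpha,0]$); $W\ltimes\tau(P^\vee)$ acts on affine functions by $w\tau(\mu)[\alpha^{(1)},\alpha^{(0)}]=[w\alpha^{(1)},\alpha^{(0)}-\hbar(\alpha^{(1)},\mu)]$ and on $V$ by composition. $\eta:R\to\mathbb C$ is $W$-invariant. Fix $S_0\subset\Delta$; $R_0=\mathrm{span}(S_0)\cap R=\bigsqcup_{\ell=1}^mR_\ell$ irreducible components with Weyl groups $W_\ell$, $S_\ell=S_0\cap R_\ell=\{\alpha^\ell_1,\dots,\alpha^\ell_{k_\ell}\}$, $\theta_\ell$ the maximal root of $R_\ell$, $h^\ell_\eta=\eta_{\theta_\ell}+\sum_jn^\ell_j\eta_{\alpha^\ell_j}$ where $\theta_\ell=\sum_jn^\ell_j\alpha^\ell_j$. Fix $\vec r=(r_1,\dots,r_m)\in\mathbb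 Z_{\ge0}^m$. For $w\in W$, $\xi:wS_0\to\mathbb Z_{\ge0}$ let $|\xi|^w_\ell=\sum_{\alpha\in wS_\ell}\xi(\alpha)$ and $\Xi_{\vec r}(w)=\{\xi\mid\xi^{-1}(0)\subset R_+,\ |\xi|^w_\ell\le r_\ell\ \forall\ell\}$. For $S\subset R$ and $\xi:S\to\mathbb Z_{\ge0}$, $H_\eta(S;\xi)=\{x\in V:(\alpha,x)=\eta_\alpha-\hbar\xi(\alpha)\ \forall\alpha\in S\}$. *)

theory Defs
  imports "HOL-Analysis.Analysis"
begin

text \<open>V = complex^'n, with the standard complex-bilinear form (x,y) = sum_i x_i y_i.
  The roots live in the real form (real coordinates), where this form is the
  Euclidean inner product.\<close>

definition bil :: "complex^'n \<Rightarrow> complex^'n \<Rightarrow> complex" where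
  "bil x y = (\<Sum>i\<in>UNIV. x$i * y$i)"

definition is_real_vec :: "complex^'n \<Rightarrow> bool" where
  "is_real_vec x \<longleftrightarrow> (\<forall>i. Im (x$i) = 0)"

definition refl :: "complex^'n \<Rightarrow> complex^'n \<Rightarrow> complex^'n" where
  "refl a x = x - (2 * bil a x / bil a a) *s a"

definition root_system :: "(complex^'n) set \<Rightarrow> bool" where
  "root_system R \<longleftrightarrow> finite R \<and> 0 \<notin> R \<and> (\<forall>a\<in>R. is_real_vec a) \<and> vec.span R = UNIV \<and>
     (\<forall>a\<in>R. \<forall>b\<in>R. refl a b \<in> R) \<and> (\<forall>a\<in>R. \<forall>b\<in>R. 2 * bil a b / bil a a \<in> \<int>)"

definition reduced :: "(complex^'n) set \<Rightarrow> bool" where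
  "reduced R \<longleftrightarrow> (\<forall>a\<in>R. \<forall>c::complex. c *s a \<in> R \<longrightarrow> c = 1 \<or> c = -1)"

definition irreducible_roots :: "(complex^'n) set \<Rightarrow> bool" where
  "irreducible_roots R \<longleftrightarrow> R \<noteq> {} \<and>
     \<not> (\<exists>A B. A \<noteq> {} \<and> B \<noteq> {} \<and> A \<union> B = R \<and> A \<inter> B = {} \<and> (\<forall>a\<in>A. \<forall>b\<in>B. bil a b = 0))"

definition is_base :: "(complex^'n) set \<Rightarrow> (complex^'n) set \<Rightarrow> bool" where
  "is_base R D \<longleftrightarrow> D \<subseteq> R \<and> vec.independent D \<and>
     (\<forall>b\<in>R. \<exists>c :: complex^'n \<Rightarrow> int. b = (\<Sum>a\<in>D. of_int (c a) *s a) \<and>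
        ((\<forall>a\<in>D. c a \<ge> 0) \<or> (\<forall>a\<in>D. c a \<le> 0)))"

definition pos_roots :: "(complex^'n) set \<Rightarrow> (complex^'n) set \<Rightarrow> (complex^'n) set" where
  "pos_roots R D = {b\<in>R. \<exists>c :: complex^'n \<Rightarrow> nat. b = (\<Sum>a\<in>D. of_nat (c a) *s a)}"

inductive_set weyl :: "(complex^'n) set \<Rightarrow> (complex^'n \<Rightarrow> complex^'n) set" for R where
  weyl_id: "id \<in> weyl R"
| weyl_step: "w \<in> weyl R \<Longrightarrow> a \<in> R \<Longrightarrow> refl a \<circ> w \<in> weyl R"

definition coweights :: "(complex^'n) set \<Rightarrow> (complex^'n) set" where
  "coweights R = {x. \<forall>a\<in>R. bil a x \<in> \<int>}"

definition dominant :: "(complex^'n) set \<Rightarrow> (complex^'n) set \<Rightarrow> (complex^'n) set" where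
  "dominant R D = {x\<in>coweights R. \<forall>a\<in>pos_roots R D. Re (bil a x) \<ge> 0}"

definition antidominant :: "(complex^'n) set \<Rightarrow> (complex^'n) set \<Rightarrow> (complex^'n) set" where
  "antidominant R D = {x\<in>coweights R. \<forall>a\<in>pos_roots R D. Re (bil a x) \<le> 0}"

text \<open>Affine functions [a1,a0] are pairs (a1,a0). Positive affine roots.\<close>
definition Rhat_plus :: "(complex^'n) set \<Rightarrow> (complex^'n) set \<Rightarrow> complex
    \<Rightarrow> ((complex^'n) \<times> complex) set" where
  "Rhat_plus R D hb = {(a, 0) | a. a \<in> pos_roots R D} \<union>
     {(a, hb * of_int k) | a k. a \<in> R \<and> k > 0}"

text \<open>Action of w tau(mu) on affine functions and on V.\<close>
definition aff_act :: "complex \<Rightarrow> (complex^'n \<Rightarrow> complex^'n) \<Rightarrow> complex^'n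
    \<Rightarrow> (complex^'n) \<times> complex \<Rightarrow> (complex^'n) \<times> complex" where
  "aff_act hb w mu f = (w (fst f), snd f - hb * bil (fst f) mu)"

definition act_V :: "complex \<Rightarrow> (complex^'n \<Rightarrow> complex^'n) \<Rightarrow> complex^'n
    \<Rightarrow> complex^'n \<Rightarrow> complex^'n" where
  "act_V hb w mu x = w (x + hb *s mu)"

definition Hyp :: "(complex^'n \<Rightarrow> complex) \<Rightarrow> complex \<Rightarrow> (complex^'n) set
    \<Rightarrow> (complex^'n \<Rightarrow> nat) \<Rightarrow> (complex^'n) set" where
  "Hyp eta hb S xi = {x. \<forall>a\<in>S. bil a x = eta a - hb * of_nat (xi a)}"

definition irred_components :: "(complex^'n) set \<Rightarrow> nat \<Rightarrow> (nat \<Rightarrow> (complex^'n) set) \<Rightarrow> bool" where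
  "irred_components R0 m Rc \<longleftrightarrow> (\<Union>l\<in>{1..m}. Rc l) = R0 \<and>
     (\<forall>l\<in>{1..m}. irreducible_roots (Rc l)) \<and>
     (\<forall>l\<in>{1..m}. \<forall>l'\<in>{1..m}. l \<noteq> l' \<longrightarrow>
        Rc l \<inter> Rc l' = {} \<and> (\<forall>a\<in>Rc l. \<forall>b\<in>Rc l'. bil a b = 0))"

definition highest_root :: "(complex^'n) set \<Rightarrow> (complex^'n) set \<Rightarrow> complex^'n \<Rightarrow> bool" where
  "highest_root R D th \<longleftrightarrow> th \<in> R \<and>
     (\<forall>b\<in>R. \<exists>c :: complex^'n \<Rightarrow> nat. th - b = (\<Sum>a\<in>D. of_nat (c a) *s a))"

definition type_A :: "(complex^'n) set \<Rightarrow> nat \<Rightarrow> bool" where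
  "type_A D k \<longleftrightarrow> (\<exists>e :: nat \<Rightarrow> complex^'n. bij_betw e {1..k} D \<and>
     (\<forall>i\<in>{1..k}. \<forall>j\<in>{1..k}. 2 * bil (e i) (e j) / bil (e j) (e j) =
        (if i = j then 2 else if i = j + 1 \<or> j = i + 1 then -1 else 0)))"

text \<open>Xi_r(w): maps xi on w S0 (values outside w S0 irrelevant).\<close>
definition Xi :: "(complex^'n) set \<Rightarrow> (complex^'n) set \<Rightarrow> (complex^'n) set \<Rightarrow> nat
    \<Rightarrow> (nat \<Rightarrow> (complex^'n) set) \<Rightarrow> (nat \<Rightarrow> nat) \<Rightarrow> (complex^'n \<Rightarrow> complex^'n)
    \<Rightarrow> (complex^'n \<Rightarrow> nat) set" where
  "Xi R D S0 m Rc r w = {xi. {a \<in> w ` S0. xi a = 0} \<subseteq> pos_roots R D \<and>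
     (\<forall>l\<in>{1..m}. (\<Sum>a\<in>w ` (S0 \<inter> Rc l). xi a) \<le> r l)}"

end

theory Submission
  imports Defs
begin

text \<open>
  Write S for the simple roots S_l of the component R_l,
  k = |S|, and put x_a = xi(w a) + (w a, lam) for a in S.  The hypotheses give
  x_a \<ge> 0 and (since theta = sum S in type A) sum_a x_a \<le> r_l + 1.  As u is
  orthogonal, u-hat = u tau(-lam) maps H_eta(w S; xi) onto the solution set of
  (u w a, y) = eta_a - hb x_a, a in S.

  If sum_a x_a \<le> r_l we take v = 1 and xi~(u w a) = x_a.  Otherwise
  sum_a x_a = r_l + 1; pick a0 with x_a0 \<ge> 1.  The Coxeter element s_1 ... s_k
  permutes -theta, alpha_1, ..., alpha_k cyclically, so a power v of it satisfies
  v S = (S - {a0}) + {-theta}.  Since h_eta = (r_l + 1) hb, the equation for a0 is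
  equivalent to (u w (-theta), y) = eta_theta given the others, and we take
  xi~ = 0 there.  The zeros of xi~ are positive roots: x_a = 0 forces either
  xi(w a) = 0 = (w a, lam), where u-hat R+ \<subseteq> R-hat+ applies, or (w a, lam) < 0,
  where antidominance of u lam applies; and (u w theta, u lam) = sum (w a, lam) \<ge> 1
  makes u w (-theta) positive.
\<close>

lemma bil_sym: "bil x y = bil y x"
  by (simp add: bil_def mult.commute)
lemma bil_add_l: "bil (x + y) z = bil x z + bil y z"
  by (simp add: bil_def sum.distrib algebra_simps)
lemma bil_add_r: "bil z (x + y) = bil z x + bil z y"
  by (simp add: bil_def sum.distrib algebra_simps)
lemma bil_diff_l: "bil (x - y) z = bil x z - bil y z"
  by (simp add: bil_def sum_subtractf algebra_simps)
lemma bil_diff_r: "bil z (x - y) = bil z x - bil z y"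
  by (simp add: bil_def sum_subtractf algebra_simps)
lemma bil_neg_l: "bil (- x) z = - bil x z"
  by (simp add: bil_def sum_negf)
lemma bil_neg_r: "bil z (- x) = - bil z x"
  by (simp add: bil_def sum_negf)
lemma bil_smult_l: "bil (c *s x) y = c * bil x y"
  by (simp add: bil_def sum_distrib_left mult.assoc)
lemma bil_smult_r: "bil y (c *s x) = c * bil y x"
  by (simp add: bil_def sum_distrib_left algebra_simps)
lemma bil_sum_l: "bil (\<Sum>a\<in>A. f a) y = (\<Sum>a\<in>A. bil (f a) y)"
  by (simp add: bil_def sum_distrib_right sum.swap[of _ UNIV])
lemma bil_sum_r: "bil y (\<Sum>a\<in>A. f a) = (\<Sum>a\<in>A. bil y (f a))"
  by (simp add: bil_def sum_distrib_left sum.swap[of _ UNIV])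

lemma bil_zero_l[simp]: "bil 0 y = 0" by (simp add: bil_def)
lemma bil_zero_r[simp]: "bil y 0 = 0" by (simp add: bil_def)

lemmas bil_simps = bil_add_l bil_add_r bil_diff_l bil_diff_r bil_neg_l bil_neg_r
  bil_smult_l bil_smult_r bil_sum_l bil_sum_r

lemma bil_self_real:
  assumes "is_real_vec a" "a \<noteq> 0"
  shows "bil a a = complex_of_real (\<Sum>i\<in>UNIV. (Re (a$i))^2)" "(\<Sum>i\<in>UNIV. (Re (a$i))^2) > 0"
proof -
  have c: "a$i = complex_of_real (Re (a$i))" for i
    using assms(1) unfolding is_real_vec_def by (simp add: complex_eq_iff)
  show "bil a a = complex_of_real (\<Sum>i\<in>UNIV. (Re (a$i))^2)"
    unfolding bil_def by (subst c, subst c) (simp add: power2_eq_square)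
  obtain j where "a$j \<noteq> 0" using assms(2) by (metis vec_eq_iff zero_index)
  then have "Re (a$j) \<noteq> 0" using c by (metis of_real_0)
  then have "(Re (a$j))^2 > 0" by simp
  moreover have "(Re (a$j))^2 \<le> (\<Sum>i\<in>UNIV. (Re (a$i))^2)"
    by (rule member_le_sum) auto
  ultimately show "(\<Sum>i\<in>UNIV. (Re (a$i))^2) > 0" by linarith
qed

lemma sum_delta_smult:
  fixes f :: "'a \<Rightarrow> complex^'n"
  assumes "finite A" "j \<in> A"
  shows "(\<Sum>i\<in>A. (if i = j then c else 0) *s f i) = c *s f j"
proof -
  have "(\<Sum>i\<in>A. (if i = j then c else 0) *s f i) = (\<Sum>i\<in>A. if i = j then c *s f i else 0)"
    by (rule sum.cong) auto
  then show ?thesis using assms by simp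
qed

lemma indep_coeffs:
  assumes "vec.independent A" "(\<Sum>a\<in>A. g a *s a) = (\<Sum>a\<in>A. h a *s a)" "x \<in> A"
  shows "g x = h x"
proof -
  have dep: "(\<Sum>a\<in>A. (g a - h a) *s a) = 0"
    using assms(2) by (simp add: vector_sub_rdistrib sum_subtractf)
  have "\<forall>c. (\<Sum>v\<in>A. c v *s v) = 0 \<longrightarrow> (\<forall>v\<in>A. c v = 0)"
    using assms(1) vec.independent_explicit[of A] by blast
  from this[rule_format, of "\<lambda>a. g a - h a"] have "g x - h x = 0" using dep assms(3) by simp
  then show ?thesis by simp
qed

section \<open>Reflections and the Weyl group\<close>

lemma refl_add: "refl a (x + y) = refl a x + refl a y"
  by (simp add: refl_def bil_simps add_divide_distrib vector_sadd_rdistrib)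
lemma refl_smult: "refl a (c *s x) = c *s refl a x"
  by (simp add: refl_def bil_simps vector_ssub_ldistrib vector_smult_assoc)
lemma refl_neg: "refl a (- x) = - refl a x"
  by (simp add: refl_def bil_simps vector_smult_lneg)
lemma refl_bil: assumes "bil a a \<noteq> 0" shows "bil (refl a x) (refl a y) = bil x y"
  using assms by (simp add: refl_def bil_simps bil_sym[of x a] bil_sym[of y a] field_simps)
lemma refl_refl: assumes "bil a a \<noteq> 0" shows "refl a (refl a x) = x"
proof -
  have "refl a (refl a x) = x - (2 * bil a x / bil a a) *s a
      - (2 * (bil a x - (2 * bil a x / bil a a) * bil a a) / bil a a) *s a"
    by (simp add: refl_def bil_simps)
  also have "\<dots> = x" using assms by (simp add: field_simps vector_sadd_rdistrib[symmetric])
  finally show ?thesis .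
qed
lemma refl_self: assumes "bil b b \<noteq> 0" shows "refl b b = - b"
proof -
  have "refl b b = b - 2 *s b" using assms by (simp add: refl_def)
  also have "\<dots> = - b" by (simp add: vec_eq_iff)
  finally show ?thesis .
qed

lemma refl_weyl: "a \<in> X \<Longrightarrow> refl a \<in> weyl X"
  using weyl_step[OF weyl_id, of a X] by simp

lemma weyl_add: "w \<in> weyl R \<Longrightarrow> w (x + y) = w x + w y"
  by (induction arbitrary: x y rule: weyl.induct) (auto simp: refl_add)
lemma weyl_smult: "w \<in> weyl R \<Longrightarrow> w (c *s x) = c *s w x"
  by (induction arbitrary: x rule: weyl.induct) (auto simp: refl_smult)
lemma weyl_neg: "w \<in> weyl R \<Longrightarrow> w (- x) = - w x"
  by (induction arbitrary: x rule: weyl.induct) (auto simp: refl_neg)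
lemma weyl_diff: "w \<in> weyl R \<Longrightarrow> w (x - y) = w x - w y"
  by (metis diff_conv_add_uminus weyl_add weyl_neg)
lemma weyl_sum: "w \<in> weyl R \<Longrightarrow> w (\<Sum>a\<in>A. f a) = (\<Sum>a\<in>A. w (f a))"
proof (induction A rule: infinite_finite_induct)
  case (insert x F) then show ?case by (simp add: weyl_add)
qed (auto simp: weyl_diff[where x = 0 and y = 0, simplified])
lemma weyl_bil: "w \<in> weyl R \<Longrightarrow> \<forall>a\<in>R. bil a a \<noteq> 0 \<Longrightarrow> bil (w x) (w y) = bil x y"
  by (induction arbitrary: x y rule: weyl.induct) (auto simp: refl_bil)
lemma weyl_bij: "w \<in> weyl R \<Longrightarrow> \<forall>a\<in>R. bil a a \<noteq> 0 \<Longrightarrow> bij w"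
proof (induction rule: weyl.induct)
  case weyl_id then show ?case by (simp add: bij_def inj_on_def)
next
  case (weyl_step w a)
  then have "bij (refl a)" by (intro o_bij[of "refl a"]) (auto simp: fun_eq_iff refl_refl)
  then show ?case using weyl_step bij_comp by blast
qed
lemma weyl_closed: "w \<in> weyl R \<Longrightarrow> \<forall>a\<in>R. \<forall>b\<in>R. refl a b \<in> R \<Longrightarrow> b \<in> R \<Longrightarrow> w b \<in> R"
  by (induction arbitrary: b rule: weyl.induct) auto
lemma weyl_mono: "w \<in> weyl R' \<Longrightarrow> R' \<subseteq> R \<Longrightarrow> w \<in> weyl R"
  by (induction rule: weyl.induct) (auto intro: weyl.intros)
lemma weyl_comp: "w1 \<in> weyl R \<Longrightarrow> w2 \<in> weyl R \<Longrightarrow> w1 \<circ> w2 \<in> weyl R"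
  by (induction rule: weyl.induct) (auto simp: comp_assoc intro: weyl.intros)
lemma weyl_pow: "w \<in> weyl R \<Longrightarrow> w ^^ p \<in> weyl R"
  by (induction p) (auto simp: weyl_comp weyl_id[unfolded id_def] intro: weyl.intros)

lemma root_norm_nonzero:
  assumes "root_system R" "a \<in> R" shows "bil a a \<noteq> 0"
proof -
  have "is_real_vec a" "a \<noteq> 0" using assms unfolding root_system_def by auto
  from bil_self_real[OF this] show ?thesis by (metis less_irrefl of_real_eq_0_iff)
qed

lemma root_neg:
  assumes "root_system R" "b \<in> R" shows "- b \<in> R"
proof -
  have "refl b b \<in> R" using assms unfolding root_system_def by blast
  then show ?thesis using refl_self[OF root_norm_nonzero[OF assms]] by simp
qed

lemma root_pos_or_neg:
  fixes R D :: "(complex^'n) set"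
  assumes rs: "root_system R" and base: "is_base R D" and b: "b \<in> R" "b \<notin> pos_roots R D"
  shows "- b \<in> pos_roots R D"
proof -
  obtain c :: "complex^'n \<Rightarrow> int" where c: "b = (\<Sum>a\<in>D. of_int (c a) *s a)"
    "(\<forall>a\<in>D. c a \<ge> 0) \<or> (\<forall>a\<in>D. c a \<le> 0)"
    using base b unfolding is_base_def by blast
  show ?thesis
  proof (cases "\<forall>a\<in>D. c a \<ge> 0")
    case True
    have "b = (\<Sum>a\<in>D. of_nat (nat (c a)) *s a)"
      unfolding c(1) by (rule sum.cong) (use True in simp_all)
    then have "b \<in> pos_roots R D"
      using b(1) unfolding pos_roots_def by (auto intro!: exI[of _ "\<lambda>a. nat (c a)"])
    then show ?thesis using b by blast
  next
    case False
    then have neg: "\<forall>a\<in>D. c a \<le> 0" using c(2) by blast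
    have "- b = (\<Sum>a\<in>D. of_nat (nat (- c a)) *s a)"
      unfolding c(1) sum_negf[symmetric]
    proof (rule sum.cong)
      fix a assume "a \<in> D"
      then have "of_nat (nat (- c a)) = - (of_int (c a) :: complex)" using neg by simp
      then show "- (of_int (c a) *s a) = of_nat (nat (- c a)) *s a" by (simp add: vector_smult_lneg)
    qed simp
    then show ?thesis using root_neg[OF rs b(1)] unfolding pos_roots_def
      by (auto intro!: exI[of _ "\<lambda>a. nat (- c a)"])
  qed
qed

text \<open>The quadratic form of the Cartan matrix of type A_m, (1/2) N^T C N, computed
  recursively along the chain.\<close>
fun chain_form :: "(nat \<Rightarrow> nat) \<Rightarrow> nat \<Rightarrow> real" where
  "chain_form N 0 = 0"
| "chain_form N (Suc m) = chain_form N m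
     - (if m \<ge> 1 then real (N m) * real (N (Suc m)) else 0) + (real (N (Suc m)))^2"

lemma chain_form_sum_squares:
  assumes "m \<ge> 1"
  shows "chain_form N m = ((real (N 1))^2 + (real (N m))^2)/2
    + (\<Sum>i\<in>{1..<m}. (real (N i) - real (N (Suc i)))^2/2)"
  using assms
proof (induction m)
  case (Suc m)
  show ?case
  proof (cases "m = 0")
    case False
    then have m1: "m \<ge> 1" by simp
    have "chain_form N (Suc m)
        = chain_form N m - real (N m) * real (N (Suc m)) + (real (N (Suc m)))^2"
      using m1 by simp
    moreover have "(\<Sum>i\<in>{1..<Suc m}. (real (N i) - real (N (Suc i)))^2/2)
        = (\<Sum>i\<in>{1..<m}. (real (N i) - real (N (Suc i)))^2/2) + (real (N m) - real (N (Suc m)))^2/2"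
      using m1 by simp
    moreover have "(real (N m) - real (N (Suc m)))^2
        = (real (N m))^2 - 2 * (real (N m) * real (N (Suc m))) + (real (N (Suc m)))^2"
      by (simp add: power2_diff)
    ultimately show ?thesis using Suc.IH[OF m1] by argo
  qed (simp add: field_simps)
qed simp

lemma chain_form_eq_one:
  assumes k1: "k \<ge> 1" and N1: "\<forall>i\<in>{1..k}. N i \<ge> 1" and Q: "chain_form N k = 1"
  shows "\<forall>i\<in>{1..k}. N i = 1"
proof -
  let ?d = "\<lambda>i. (real (N i) - real (N (Suc i)))^2/2"
  have ends: "(real (N 1))^2 \<ge> 1" "(real (N k))^2 \<ge> 1" using N1 k1 by auto
  have diffs: "sum ?d {1..<k} \<ge> 0" by (intro sum_nonneg) simp
  have Q': "((real (N 1))^2 + (real (N k))^2)/2 + sum ?d {1..<k} = 1"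
    using Q chain_form_sum_squares[OF k1] by simp
  then have "sum ?d {1..<k} = 0" using ends diffs by argo
  then have step: "N i = N (Suc i)" if "i \<in> {1..<k}" for i
    using sum_nonneg_eq_0_iff[of "{1..<k}" ?d] that by simp
  have "(real (N 1))^2 = 1" using Q' ends diffs by argo
  then have first: "N 1 = 1" by (simp add: power2_eq_1_iff)
  show ?thesis
  proof
    fix i assume "i \<in> {1..k}"
    then show "N i = 1"
    proof (induction i)
      case (Suc i) then show ?case using step[of i] first by (cases "i = 0") auto
    qed simp
  qed
qed

lemma rotation_image:
  assumes "P \<in> {1..k}"
  shows "(\<lambda>i. (i + P) mod Suc k) ` {1..k} = {0..k} - {P}"
proof -
  let ?f = "\<lambda>i. (i + P) mod Suc k"
  have undo: "(?f x + (Suc k - P)) mod Suc k = x" if "x \<le> k" for x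
  proof -
    have "(?f x + (Suc k - P)) mod Suc k = (x + P + (Suc k - P)) mod Suc k"
      by (rule mod_add_left_eq)
    also have "x + P + (Suc k - P) = x + Suc k" using assms by simp
    also have "(x + Suc k) mod Suc k = x" using that by (simp only: mod_add_self2) simp
    finally show ?thesis .
  qed
  have inj: "inj_on ?f {0..k}"
  proof (rule inj_onI)
    fix x y assume "x \<in> {0..k}" "y \<in> {0..k}" and eq: "?f x = ?f y"
    then have "x \<le> k" "y \<le> k" by auto
    have "x = (?f x + (Suc k - P)) mod Suc k" by (rule undo[OF \<open>x \<le> k\<close>, symmetric])
    also have "\<dots> = (?f y + (Suc k - P)) mod Suc k" by (simp only: eq)
    also have "\<dots> = y" by (rule undo[OF \<open>y \<le> k\<close>])
    finally show "x = y" .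
  qed
  have "?f ` {0..k} = {0..k}"
    by (rule endo_inj_surj) (auto simp: inj less_Suc_eq_le)
  moreover have "{1..k} = {0..k} - {0}" by auto
  ultimately show ?thesis using assms by (simp add: inj_on_image_set_diff[OF inj])
qed

section \<open>A chain of simple roots of type A\<close>

definition Cart :: "nat \<Rightarrow> nat \<Rightarrow> int" where
  "Cart i j = (if i = j then 2 else if i = j + 1 \<or> j = i + 1 then -1 else 0)"

locale type_A_chain =
  fixes R D S :: "(complex^'n) set" and e :: "nat \<Rightarrow> complex^'n" and k :: nat
  assumes rs: "root_system R" and red: "reduced R" and base: "is_base R D" and SD: "S \<subseteq> D"
    and eb: "bij_betw e {1..k} S" and k1: "k \<ge> 1"
    and cart: "\<forall>i\<in>{1..k}. \<forall>j\<in>{1..k}. 2 * bil (e i) (e j) / bil (e j) (e j) =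
        (if i = j then 2 else if i = j + 1 \<or> j = i + 1 then -1 else 0)"
begin

lemma eS: "i \<in> {1..k} \<Longrightarrow> e i \<in> S" using eb bij_betwE by blast
lemma eR: "i \<in> {1..k} \<Longrightarrow> e i \<in> R" using eS SD base unfolding is_base_def by blast
lemma e_inj: "inj_on e {1..k}" using eb by (simp add: bij_betw_def)
lemma e_img: "e ` {1..k} = S" using eb by (simp add: bij_betw_def)
lemma good: "a \<in> R \<Longrightarrow> bil a a \<noteq> 0" by (rule root_norm_nonzero[OF rs])
lemma indD: "vec.independent D" using base unfolding is_base_def by blast
lemma finD: "finite D" by (rule vec.independent_explicit[THEN iffD1, THEN conjunct1, OF indD])
lemma indS: "vec.independent S" by (rule vec.independent_mono[OF indD SD])

lemma reindex: "(\<Sum>a\<in>S. G a) = (\<Sum>i\<in>{1..k}. G (e i))"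
  unfolding e_img[symmetric] by (rule sum.reindex[OF e_inj, unfolded comp_def])

lemma inv_e: "i \<in> {1..k} \<Longrightarrow> inv_into {1..k} e (e i) = i"
  using e_inj by (simp add: inv_into_f_f)
text \<open>The same in the form produced by the simplifier, which writes 1 as Suc 0.\<close>
lemma inv_e_simp[simp]: "Suc 0 \<le> i \<Longrightarrow> i \<le> k \<Longrightarrow> inv_into {Suc 0..k} e (e i) = i"
  using inv_e by simp

lemma sign_idx:
  assumes "b \<in> R" "b = (\<Sum>i\<in>{1..k}. of_int (f i) *s e i)"
  shows "(\<forall>i\<in>{1..k}. f i \<ge> 0) \<or> (\<forall>i\<in>{1..k}. f i \<le> 0)"
proof -
  obtain c :: "complex^'n \<Rightarrow> int" where c: "b = (\<Sum>a\<in>D. of_int (c a) *s a)"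
    "(\<forall>a\<in>D. c a \<ge> 0) \<or> (\<forall>a\<in>D. c a \<le> 0)"
    using base assms(1) unfolding is_base_def by blast
  define F where "F a = (if a \<in> S then (of_int (f (inv_into {1..k} e a)) :: complex) else 0)" for a
  have "(\<Sum>a\<in>D. F a *s a) = (\<Sum>a\<in>S. F a *s a)"
    by (rule sum.mono_neutral_right) (use finD SD in \<open>auto simp: F_def\<close>)
  also have "\<dots> = (\<Sum>i\<in>{1..k}. of_int (f i) *s e i)"
    unfolding reindex by (rule sum.cong) (auto simp: F_def eS inv_e)
  finally have "(\<Sum>a\<in>D. (of_int (c a) :: complex) *s a) = (\<Sum>a\<in>D. F a *s a)"
    using assms(2) c(1) by simp
  then have cc: "of_int (c a) = F a" if "a \<in> D" for a by (rule indep_coeffs[OF indD _ that])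
  have "c (e i) = f i" if "i \<in> {1..k}" for i
    using cc[of "e i"] eS[OF that] SD inv_e[OF that] by (auto simp: F_def)
  then show ?thesis using c(2) eS SD by (metis subsetD)
qed

text \<open>All simple roots of the chain have the same length cc > 0, so the form on the chain
  is cc/2 times the Cartan matrix.\<close>
definition "cc = bil (e 1) (e 1)"

lemma diag_step:
  assumes "1 \<le> i" "i + 1 \<le> k"
  shows "bil (e (i+1)) (e (i+1)) = bil (e i) (e i)"
proof -
  have i: "i \<in> {1..k}" "i+1 \<in> {1..k}" using assms by auto
  have n1: "bil (e i) (e i) \<noteq> 0" "bil (e (i+1)) (e (i+1)) \<noteq> 0" using good eR i by auto
  have "2 * bil (e i) (e (i+1)) / bil (e (i+1)) (e (i+1)) = -1" using cart i by force
  then have a: "bil (e (i+1)) (e (i+1)) = - 2 * bil (e i) (e (i+1))" using n1 by (simp add: field_simps)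
  have "2 * bil (e (i+1)) (e i) / bil (e i) (e i) = -1" using cart i by force
  then have b: "bil (e i) (e i) = - 2 * bil (e (i+1)) (e i)" using n1 by (simp add: field_simps)
  show ?thesis unfolding a b bil_sym[of "e (i+1)" "e i"] ..
qed

lemma diag: "i \<in> {1..k} \<Longrightarrow> bil (e i) (e i) = cc"
proof (induction i)
  case (Suc i)
  show ?case
  proof (cases "i = 0")
    case False
    then have "bil (e (i+1)) (e (i+1)) = bil (e i) (e i)" using diag_step Suc.prems by simp
    then show ?thesis using Suc False by simp
  qed (simp add: cc_def)
qed simp

definition "c0 = Re cc"

lemma cc_c0: "cc = complex_of_real c0" and c0_pos: "c0 > 0"
proof -
  have "e 1 \<in> R" using eR k1 by simp
  then have "is_real_vec (e 1)" "e 1 \<noteq> 0" using rs unfolding root_system_def by auto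
  from bil_self_real[OF this] show "cc = complex_of_real c0" "c0 > 0"
    unfolding cc_def c0_def by auto
qed

lemma bil_ee: "i \<in> {1..k} \<Longrightarrow> j \<in> {1..k} \<Longrightarrow> bil (e i) (e j) = of_int (Cart i j) * cc / 2"
proof -
  assume ij: "i \<in> {1..k}" "j \<in> {1..k}"
  have "2 * bil (e i) (e j) / bil (e j) (e j) = (if i = j then 2 else if i = j + 1 \<or> j = i + 1 then -1 else 0)"
    using cart ij by blast
  then have "2 * bil (e i) (e j) / cc = of_int (Cart i j)"
    unfolding diag[OF ij(2)] by (simp add: Cart_def)
  then show ?thesis using cc_c0 c0_pos by (simp add: field_simps)
qed

lemma refl_ee: "i \<in> {1..k} \<Longrightarrow> j \<in> {1..k} \<Longrightarrow> refl (e i) (e j) = e j - of_int (Cart i j) *s e i"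
proof -
  assume ij: "i \<in> {1..k}" "j \<in> {1..k}"
  have "2 * bil (e i) (e j) / bil (e i) (e i) = of_int (Cart i j)"
    unfolding bil_ee[OF ij] diag[OF ij(1)] using cc_c0 c0_pos by simp
  then show ?thesis unfolding refl_def by simp
qed

lemma bil_e_comb:
  assumes "j \<in> {1..k}"
  shows "bil (e j) (\<Sum>i\<in>{1..k}. of_nat (N i) *s e i)
     = complex_of_real (\<Sum>i\<in>{1..k}. real (N i) * real_of_int (Cart j i) * c0 / 2)"
  unfolding bil_sum_r bil_smult_r of_real_sum
  by (rule sum.cong) (use assms in \<open>auto simp: bil_ee cc_c0\<close>)

subsection \<open>All roots in the span of the chain have the same length\<close>

text \<open>A nonzero nonnegative combination of the chain pairs positively with some simple root
  occurring in it; reflecting in that root lowers the height.\<close>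
lemma descent:
  assumes beta: "\<beta> \<in> R" and comb: "\<beta> = (\<Sum>i\<in>{1..k}. of_nat (N i) *s e i)"
  obtains j z where "j \<in> {1..k}" "N j > 0" "z > 0" "refl (e j) \<beta> = \<beta> - of_int z *s e j"
proof -
  define p where "p j = (\<Sum>i\<in>{1..k}. real (N i) * real_of_int (Cart j i) * c0 / 2)" for j
  have pair: "bil (e j) \<beta> = complex_of_real (p j)" if "j \<in> {1..k}" for j
    unfolding comb p_def by (rule bil_e_comb[OF that])
  have "bil \<beta> \<beta> = (\<Sum>j\<in>{1..k}. of_nat (N j) * bil (e j) \<beta>)"
    by (subst (1) comb) (simp add: bil_simps)
  also have "\<dots> = complex_of_real (\<Sum>j\<in>{1..k}. real (N j) * p j)"
    unfolding of_real_sum by (rule sum.cong) (auto simp: pair)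
  finally have norm: "bil \<beta> \<beta> = complex_of_real (\<Sum>j\<in>{1..k}. real (N j) * p j)" .
  have "is_real_vec \<beta>" "\<beta> \<noteq> 0" using beta rs unfolding root_system_def by auto
  from bil_self_real[OF this] norm have "(\<Sum>j\<in>{1..k}. real (N j) * p j) > 0"
    by (metis of_real_eq_iff)
  then obtain j where j: "j \<in> {1..k}" "real (N j) * p j > 0"
    by (meson not_less sum_nonpos)
  then have Nj: "N j > 0" and pj: "p j > 0" by (auto simp: zero_less_mult_iff)
  have "2 * bil (e j) \<beta> / bil (e j) (e j) \<in> \<int>"
    using rs eR[OF j(1)] beta unfolding root_system_def by blast
  then obtain z where z: "2 * bil (e j) \<beta> / bil (e j) (e j) = of_int z" by (metis Ints_cases)
  have "complex_of_int z = complex_of_real (2 * p j / c0)"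
    using z[symmetric] unfolding pair[OF j(1)] diag[OF j(1)] cc_c0 by simp
  then have "real_of_int z = 2 * p j / c0" by (metis of_real_eq_iff of_real_of_int_eq)
  then have "real_of_int z > 0" using pj c0_pos by simp
  then have "z > 0" by simp
  moreover have "refl (e j) \<beta> = \<beta> - of_int z *s e j" unfolding refl_def z ..
  ultimately show ?thesis using that j(1) Nj by blast
qed

lemma root_norm:
  assumes "\<beta> \<in> R" "\<beta> = (\<Sum>i\<in>{1..k}. of_nat (N i) *s e i)"
  shows "bil \<beta> \<beta> = cc"
  using assms
proof (induction N arbitrary: \<beta> rule: measure_induct_rule[where f = "\<lambda>N. sum N {1..k}"])
  case (less N \<beta>)
  obtain j z where j: "j \<in> {1..k}" "N j > 0" and z: "z > 0"
    and rb: "refl (e j) \<beta> = \<beta> - of_int z *s e j"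
    using descent[OF less.prems] .
  show ?case
  proof (cases "\<exists>i\<in>{1..k}. i \<noteq> j \<and> N i > 0")
    case True
    text \<open>The reflected root still has a nonnegative coefficient, hence all are
      nonnegative, and its height is smaller by z.\<close>
    define N' where "N' i = int (N i) - (if i = j then z else 0)" for i
    have rbR: "refl (e j) \<beta> \<in> R" using rs eR[OF j(1)] less.prems(1) unfolding root_system_def by blast
    have "(\<Sum>i\<in>{1..k}. of_int (N' i) *s e i)
        = (\<Sum>i\<in>{1..k}. of_nat (N i) *s e i - (if i = j then (of_int z :: complex) else 0) *s e i)"
      by (rule sum.cong) (auto simp: N'_def vector_sub_rdistrib)
    also have "\<dots> = \<beta> - of_int z *s e j"
      unfolding sum_subtractf sum_delta_smult[OF finite_atLeastAtMost j(1)] less.prems(2) ..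
    finally have rbsum: "refl (e j) \<beta> = (\<Sum>i\<in>{1..k}. of_int (N' i) *s e i)"
      unfolding rb by (rule sym)
    from True obtain i where i: "i \<in> {1..k}" "i \<noteq> j" "N i > 0" by blast
    then have "N' i > 0" by (simp add: N'_def)
    then have nn: "\<forall>i\<in>{1..k}. N' i \<ge> 0" using sign_idx[OF rbR rbsum] i(1) by force
    define N2 where "N2 i = nat (N' i)" for i
    have rb2: "refl (e j) \<beta> = (\<Sum>i\<in>{1..k}. of_nat (N2 i) *s e i)"
      unfolding rbsum by (rule sum.cong) (use nn in \<open>auto simp: N2_def\<close>)
    have "int (sum N2 {1..k}) = (\<Sum>i\<in>{1..k}. N' i)"
      unfolding of_nat_sum by (rule sum.cong) (use nn in \<open>auto simp: N2_def\<close>)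
    also have "\<dots> = int (sum N {1..k}) - z"
      using j(1) by (simp add: N'_def sum_subtractf sum.delta')
    finally have "sum N2 {1..k} < sum N {1..k}" using z by linarith
    from less.IH[OF this rbR rb2] show ?thesis using refl_bil good eR[OF j(1)] by metis
  next
    case False
    text \<open>Otherwise the root is a multiple of e j, hence equal to it as R is reduced.\<close>
    have "\<beta> = (\<Sum>i\<in>{1..k}. (if i = j then of_nat (N j) else 0) *s e i)"
      unfolding less.prems(2) by (rule sum.cong) (use False in auto)
    then have bN: "\<beta> = of_nat (N j) *s e j" by (simp only: sum_delta_smult[OF finite_atLeastAtMost j(1)])
    have "(of_nat (N j) :: complex) = 1 \<or> of_nat (N j) = (-1 :: complex)"
      using red eR[OF j(1)] less.prems(1) bN unfolding reduced_def by blast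
    then have "N j = 1"
    proof
      assume "(of_nat (N j) :: complex) = 1" then show ?thesis by (metis of_nat_1 of_nat_eq_iff)
    next
      assume "(of_nat (N j) :: complex) = -1"
      then have "Re (of_nat (N j)) = -1" by simp
      then show ?thesis by simp
    qed
    then show ?thesis using bN diag[OF j(1)] by simp
  qed
qed

lemma bil_T_e:
  assumes "Suc m \<le> k"
  shows "bil (\<Sum>i\<in>{1..m}. of_nat (N i) *s e i) (e (Suc m))
    = (if m \<ge> 1 then - of_nat (N m) * cc / 2 else 0)"
proof -
  have "bil (\<Sum>i\<in>{1..m}. of_nat (N i) *s e i) (e (Suc m))
      = (\<Sum>i\<in>{1..m}. of_nat (N i) * bil (e i) (e (Suc m)))"
    by (simp add: bil_simps)
  also have "\<dots> = (\<Sum>i\<in>{1..m}. if i = m then - of_nat (N m) * cc / 2 else 0)"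
  proof (rule sum.cong)
    fix i assume i: "i \<in> {1..m}"
    then have "bil (e i) (e (Suc m)) = of_int (Cart i (Suc m)) * cc / 2"
      using assms by (intro bil_ee) auto
    moreover have "Cart i (Suc m) = (if i = m then -1 else 0)" using i by (auto simp: Cart_def)
    ultimately show "of_nat (N i) * bil (e i) (e (Suc m)) = (if i = m then - of_nat (N m) * cc / 2 else 0)"
      by (cases "i = m") (simp_all add: field_simps)
  qed simp
  also have "\<dots> = (if m \<ge> 1 then - of_nat (N m) * cc / 2 else 0)"
    by (simp only: sum.delta finite_atLeastAtMost) auto
  finally show ?thesis .
qed

lemma bil_chain_comb:
  "m \<le> k \<Longrightarrow> bil (\<Sum>i\<in>{1..m}. of_nat (N i) *s e i) (\<Sum>i\<in>{1..m}. of_nat (N i) *s e i)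
     = of_real (c0 * chain_form N m)"
proof (induction m)
  case (Suc m)
  let ?T = "\<Sum>i\<in>{1..m}. of_nat (N i) *s e i"
  let ?a = "of_nat (N (Suc m)) :: complex"
  have T: "(\<Sum>i\<in>{1..Suc m}. of_nat (N i) *s e i) = ?T + ?a *s e (Suc m)" by simp
  have ih: "bil ?T ?T = of_real (c0 * chain_form N m)" using Suc by simp
  have te: "bil ?T (e (Suc m)) = (if m \<ge> 1 then - of_nat (N m) * cc / 2 else 0)"
    using bil_T_e Suc.prems .
  have ee: "bil (e (Suc m)) (e (Suc m)) = cc" using diag Suc.prems by simp
  have "bil (?T + ?a *s e (Suc m)) (?T + ?a *s e (Suc m))
      = bil ?T ?T + 2 * ?a * bil ?T (e (Suc m)) + ?a * ?a * bil (e (Suc m)) (e (Suc m))"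
    unfolding bil_add_l bil_add_r bil_smult_l bil_smult_r bil_sym[of "e (Suc m)" ?T]
    by (simp add: algebra_simps)
  also have "\<dots> = of_real (c0 * chain_form N (Suc m))"
    unfolding ih te ee cc_c0 by (auto simp: algebra_simps power2_eq_square)
  finally show ?case unfolding T .
qed simp

lemma root_coeffs_one:
  assumes "\<beta> \<in> R" "\<beta> = (\<Sum>a\<in>S. of_nat (N a) *s a)" "\<forall>a\<in>S. N a \<ge> 1"
  shows "\<forall>a\<in>S. N a = 1"
proof -
  have beta: "\<beta> = (\<Sum>i\<in>{1..k}. of_nat (N (e i)) *s e i)" using assms(2) reindex by simp
  have "of_real (c0 * chain_form (\<lambda>i. N (e i)) k) = bil \<beta> \<beta>"
    unfolding beta by (rule bil_chain_comb[symmetric]) simp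
  also have "\<dots> = of_real c0" using root_norm[OF assms(1) beta] cc_c0 by simp
  finally have "chain_form (\<lambda>i. N (e i)) k = 1" using c0_pos by simp
  moreover have "\<forall>i\<in>{1..k}. N (e i) \<ge> 1" using assms(3) eS by blast
  ultimately have "\<forall>i\<in>{1..k}. N (e i) = 1" by (intro chain_form_eq_one[OF k1])
  then show ?thesis using e_img by auto
qed

subsection \<open>The Coxeter element\<close>

text \<open>E m = s_1 ... s_m; the Coxeter element is sig = E k.  With alpha_0 = - (e 1 + ... + e k)
  it permutes alpha_0, ..., alpha_k cyclically.\<close>
primrec E :: "nat \<Rightarrow> complex^'n \<Rightarrow> complex^'n" where
  "E 0 = id"
| "E (Suc m) = E m \<circ> refl (e (Suc m))"

lemma E_weyl: "\<forall>i\<in>{1..k}. e i \<in> X \<Longrightarrow> m \<le> k \<Longrightarrow> E m \<in> weyl X"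
proof (induction m)
  case 0 then show ?case using weyl_id[of X] by (simp add: id_def)
next
  case (Suc m)
  have "e (Suc m) \<in> X" using Suc.prems by auto
  then have "refl (e (Suc m)) \<in> weyl X" by (rule refl_weyl)
  moreover have "E m \<in> weyl X" using Suc by simp
  ultimately show ?case unfolding E.simps by (rule weyl_comp[rotated])
qed

definition "rho m = (\<Sum>i\<in>{1..m}. e i)"

lemma E_e: "m \<le> k \<Longrightarrow> j \<in> {1..k} \<Longrightarrow>
  E m (e j) = (if j < m then e (Suc j) else if j = m then - rho m
               else if j = Suc m then rho (Suc m) else e j)"
proof (induction m arbitrary: j)
  case 0 then show ?case by (auto simp: rho_def)
next
  case (Suc m)
  have Ew: "E m \<in> weyl R" using E_weyl[of R m] eR Suc.prems by auto
  have sm: "Suc m \<in> {1..k}" using Suc.prems by auto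
  have ih: "E m (e i) = (if i < m then e (Suc i) else if i = m then - rho m
                         else if i = Suc m then rho (Suc m) else e i)"
    if "i \<in> {1..k}" for i using Suc.IH[OF _ that] Suc.prems by simp
  have Esm: "E m (e (Suc m)) = rho (Suc m)" using ih[OF sm] by simp
  have "E (Suc m) (e j) = E m (e j - of_int (Cart (Suc m) j) *s e (Suc m))"
    using refl_ee[OF sm Suc.prems(2)] by simp
  also have "\<dots> = E m (e j) - of_int (Cart (Suc m) j) *s rho (Suc m)"
    by (simp add: weyl_diff[OF Ew] weyl_smult[OF Ew] Esm)
  finally have eq: "E (Suc m) (e j) = E m (e j) - of_int (Cart (Suc m) j) *s rho (Suc m)" .
  have rs: "rho (Suc m) = rho m + e (Suc m)" by (simp add: rho_def)
  have rss: "rho (Suc (Suc m)) = rho (Suc m) + e (Suc (Suc m))" by (simp add: rho_def)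
  consider "j < m" | "j = m" | "j = Suc m" | "j = Suc (Suc m)" | "j > Suc (Suc m)" by linarith
  then show ?case
  proof cases
    case 1 then show ?thesis using eq ih[OF Suc.prems(2)] by (simp add: Cart_def)
  next
    case 2 then show ?thesis using eq ih[OF Suc.prems(2)] Suc.prems(2) by (simp add: Cart_def rs)
  next
    case 3
    have "- rho (Suc m) = rho (Suc m) - 2 *s rho (Suc m)" by (simp add: vec_eq_iff)
    then show ?thesis using 3 eq ih[OF Suc.prems(2)] by (simp add: Cart_def)
  next
    case 4 then show ?thesis using eq ih[OF Suc.prems(2)] by (simp add: Cart_def rss add.commute)
  next
    case 5 then show ?thesis using eq ih[OF Suc.prems(2)] by (simp add: Cart_def)
  qed
qed

definition "sig = E k"
definition "al i = (if i = 0 then - rho k else e i)"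

lemma sig_weyl: "\<forall>i\<in>{1..k}. e i \<in> X \<Longrightarrow> sig \<in> weyl X"
  unfolding sig_def by (rule E_weyl) auto

lemma sig_e: "j \<in> {1..k} \<Longrightarrow> sig (e j) = (if j < k then e (Suc j) else - rho k)"
  unfolding sig_def using E_e[of k j] by auto

lemma sig_al: "i \<in> {0..k} \<Longrightarrow> sig (al i) = al (Suc i mod Suc k)"
proof -
  assume i: "i \<in> {0..k}"
  have sw: "sig \<in> weyl R" using sig_weyl eR by blast
  obtain k' where k': "k = Suc k'" using k1 by (cases k) auto
  show ?thesis
  proof (cases "i = 0")
    case True
    have split: "rho k = e 1 + (\<Sum>j\<in>{2..k}. e j)"
      unfolding rho_def k' by (simp add: sum.atLeast_Suc_atMost numeral_2_eq_2)
    have "sig (rho k) = (\<Sum>j\<in>{1..k}. sig (e j))" unfolding rho_def by (rule weyl_sum[OF sw])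
    also have "\<dots> = (\<Sum>j\<in>{1..k'}. e (Suc j)) - rho k"
      unfolding k' using sig_e k' by (simp add: sum.cl_ivl_Suc)
    also have "(\<Sum>j\<in>{1..k'}. e (Suc j)) = (\<Sum>j\<in>{2..k}. e j)"
      unfolding k' sum.shift_bounds_cl_Suc_ivl[symmetric] by (simp add: numeral_2_eq_2)
    finally have "sig (rho k) = - e 1" using split by simp
    then show ?thesis using True k1 by (simp add: al_def weyl_neg[OF sw])
  next
    case False
    then have "i \<in> {1..k}" using i by auto
    then show ?thesis using False i by (auto simp: al_def sig_e)
  qed
qed

lemma sigpow_al: "i \<in> {0..k} \<Longrightarrow> (sig ^^ p) (al i) = al ((i + p) mod Suc k)"
proof (induction p)
  case (Suc p)
  have "(i + p) mod Suc k \<in> {0..k}" by (simp add: less_Suc_eq_le)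
  then have "sig (al ((i + p) mod Suc k)) = al (Suc ((i + p) mod Suc k) mod Suc k)" by (rule sig_al)
  then show ?case using Suc by (simp add: mod_Suc_eq)
qed simp

lemma sigpow_S: "P \<in> {1..k} \<Longrightarrow> (sig ^^ P) ` S = insert (- rho k) (S - {e P})"
proof -
  assume P: "P \<in> {1..k}"
  have "(sig ^^ P) ` S = (sig ^^ P) ` (al ` {1..k})" unfolding e_img[symmetric] by (auto simp: al_def)
  also have "\<dots> = al ` ((\<lambda>i. (i + P) mod Suc k) ` {1..k})"
    unfolding image_image by (rule image_cong) (auto simp: sigpow_al)
  also have "\<dots> = al ` ({0..k} - {P})" unfolding rotation_image[OF P] ..
  also have "\<dots> = insert (- rho k) (e ` ({1..k} - {P}))"
  proof -
    have "{0..k} - {P} = insert 0 ({1..k} - {P})" using P by auto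
    then show ?thesis by (auto simp: al_def)
  qed
  also have "e ` ({1..k} - {P}) = S - {e P}"
    using P e_img e_inj by (auto simp: inj_on_image_set_diff)
  finally show ?thesis .
qed

lemma coxeter_rotation:
  assumes "a0 \<in> S"
  shows "\<exists>v\<in>weyl S. v ` S = insert (- (\<Sum>a\<in>S. a)) (S - {a0})"
proof -
  obtain P where P: "P \<in> {1..k}" "a0 = e P" using assms e_img by blast
  have "sig ^^ P \<in> weyl S" by (rule weyl_pow[OF sig_weyl]) (use eS in blast)
  moreover have "rho k = (\<Sum>a\<in>S. a)" unfolding rho_def reindex ..
  then have "(sig ^^ P) ` S = insert (- (\<Sum>a\<in>S. a)) (S - {a0})"
    using sigpow_S[OF P(1)] P(2) by simp
  ultimately show ?thesis by blast
qed

end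

lemma type_A_chain_exists:
  assumes "root_system R" "reduced R" "is_base R D" "S \<subseteq> D" "S \<noteq> {}" "type_A S (card S)"
  obtains e where "type_A_chain R D S e (card S)"
proof -
  have "vec.independent D" using assms(3) unfolding is_base_def by blast
  then have "finite D" by (rule vec.independent_explicit[THEN iffD1, THEN conjunct1])
  then have "finite S" using assms(4) by (rule finite_subset[rotated])
  then have "card S \<ge> 1" using assms(5) by (simp add: Suc_le_eq card_gt_0_iff)
  moreover obtain e where "bij_betw e {1..card S} S"
    "\<forall>i\<in>{1..card S}. \<forall>j\<in>{1..card S}. 2 * bil (e i) (e j) / bil (e j) (e j) =
        (if i = j then 2 else if i = j + 1 \<or> j = i + 1 then -1 else 0)"
    using assms(6) unfolding type_A_def by blast
  ultimately have "type_A_chain R D S e (card S)"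
    using assms(1-4) by unfold_locales
  then show thesis by (rule that)
qed

lemma Hyp_insert:
  "Hyp eta hb (insert q B) xi = {y. bil q y = eta q - hb * of_nat (xi q)} \<inter> Hyp eta hb B xi"
  unfolding Hyp_def by auto

lemma Hyp_cong: "(\<And>b. b \<in> B \<Longrightarrow> xi b = xi' b) \<Longrightarrow> Hyp eta hb B xi = Hyp eta hb B xi'"
  unfolding Hyp_def by auto

lemma redundant_equation:
  fixes f :: "'a \<Rightarrow> complex^'n" and c :: "'a \<Rightarrow> complex"
  assumes "finite A" "a0 \<in> A"
  shows "{y. bil (- (\<Sum>a\<in>A. f a)) y = - (\<Sum>a\<in>A. c a) \<and> (\<forall>a\<in>A - {a0}. bil (f a) y = c a)}
       = {y. \<forall>a\<in>A. bil (f a) y = c a}"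
proof -
  have split: "(\<Sum>a\<in>A. g a) = g a0 + (\<Sum>a\<in>A - {a0}. g a)" for g :: "'a \<Rightarrow> complex"
    using sum.remove[OF assms] .
  have rest: "(\<Sum>a\<in>A - {a0}. bil (f a) y) = (\<Sum>a\<in>A - {a0}. c a)"
    if "\<forall>a\<in>A - {a0}. bil (f a) y = c a" for y
    using that by (intro sum.cong) auto
  show ?thesis
  proof (intro equalityI subsetI CollectI)
    fix y assume "y \<in> {y. bil (- (\<Sum>a\<in>A. f a)) y = - (\<Sum>a\<in>A. c a) \<and> (\<forall>a\<in>A - {a0}. bil (f a) y = c a)}"
    then have sum_eq: "(\<Sum>a\<in>A. bil (f a) y) = (\<Sum>a\<in>A. c a)"
      and others: "\<forall>a\<in>A - {a0}. bil (f a) y = c a" by (auto simp: bil_neg_l bil_sum_l)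
    then have "bil (f a0) y = c a0" using split[of "\<lambda>a. bil (f a) y"] split[of c] rest by simp
    then show "\<forall>a\<in>A. bil (f a) y = c a" using others by blast
  next
    fix y assume "y \<in> {y. \<forall>a\<in>A. bil (f a) y = c a}"
    then show "bil (- (\<Sum>a\<in>A. f a)) y = - (\<Sum>a\<in>A. c a) \<and> (\<forall>a\<in>A - {a0}. bil (f a) y = c a)"
      by (simp add: bil_neg_l bil_sum_l)
  qed
qed

text \<open>The hypotheses of the theorem, for one component: S = S_0 \<inter> R_l of type A with highest
  root th of R_l, a level rl = r_l with h_eta = (rl + 1) hb, and xi \<in> Xi restricted to w S.\<close>
locale type_A_component =
  fixes R D S Rl :: "(complex^'n) set" and hb :: complex and eta :: "complex^'n \<Rightarrow> complex"
    and rl :: nat and u w :: "complex^'n \<Rightarrow> complex^'n" and lam th :: "complex^'n"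
    and n xi :: "complex^'n \<Rightarrow> nat"
  assumes rs: "root_system R" and red: "reduced R" and base: "is_base R D"
    and S_D: "S \<subseteq> D" and S_Rl: "S \<subseteq> Rl" and Rl_R: "Rl \<subseteq> R"
    and hb_nz: "hb \<noteq> 0" and eta_inv: "\<forall>v\<in>weyl R. \<forall>a\<in>R. eta (v a) = eta a"
    and u: "u \<in> weyl R" and w: "w \<in> weyl R"
    and lam: "lam \<in> coweights R" and ulam: "u lam \<in> antidominant R D"
    and uhat: "\<forall>a\<in>pos_roots R D. aff_act hb u (- lam) (a, 0) \<in> Rhat_plus R D hb"
    and typeA: "type_A S (card S)"
    and th: "highest_root Rl S th" and n: "th = (\<Sum>a\<in>S. of_nat (n a) *s a)"
    and h: "eta th + (\<Sum>a\<in>S. of_nat (n a) * eta a) = (of_nat rl + 1) * hb"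
    and xi_zero: "{b \<in> w ` S. xi b = 0} \<subseteq> pos_roots R D"
    and xi_sum: "(\<Sum>b\<in>w ` S. xi b) \<le> rl"
    and m0: "real (\<Sum>b\<in>w ` S. xi b) + Re (bil (w th) lam) \<le> real rl + 1"
    and mj: "\<forall>a\<in>S. real (xi (w a)) + Re (bil (w a) lam) \<ge> 0"
begin

lemma goodR: "\<forall>a\<in>R. bil a a \<noteq> 0" using root_norm_nonzero[OF rs] by blast
lemma SR: "S \<subseteq> R" using S_Rl Rl_R by blast
lemma indS: "vec.independent S"
  using base vec.independent_mono[OF _ S_D] unfolding is_base_def by blast
lemma finS: "finite S" by (rule vec.independent_explicit[THEN iffD1, THEN conjunct1, OF indS])
lemma thR: "th \<in> R" using th Rl_R unfolding highest_root_def by blast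
lemma wR: "a \<in> R \<Longrightarrow> w a \<in> R" using weyl_closed[OF w] rs unfolding root_system_def by blast
lemma uR: "a \<in> R \<Longrightarrow> u a \<in> R" using weyl_closed[OF u] rs unfolding root_system_def by blast
lemma u_bil: "bil (u x) (u y) = bil x y" using weyl_bil[OF u goodR] .
lemma w_inj: "inj w" using weyl_bij[OF w goodR] bij_is_inj by blast
lemma uw_inj: "inj (u \<circ> w)" using weyl_bij[OF u goodR] w_inj bij_is_inj inj_compose by blast
lemma eta_uw: "a \<in> R \<Longrightarrow> eta (u (w a)) = eta a" using eta_inv u w wR by metis

lemma S_ne: "S \<noteq> {}"
proof
  assume "S = {}"
  then have "th = 0" using n by simp
  then show False using thR rs unfolding root_system_def by simp
qed

subsection \<open>The highest root is the sum of the simple roots\<close>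

text \<open>Its coefficients are \<ge> 1 because th - a is a nonnegative combination for each a in S.\<close>
lemma n_ge1: "a \<in> S \<Longrightarrow> n a \<ge> 1"
proof -
  assume a: "a \<in> S"
  obtain c :: "complex^'n \<Rightarrow> nat" where c: "th - a = (\<Sum>b\<in>S. of_nat (c b) *s b)"
    using th a S_Rl unfolding highest_root_def by blast
  have "(\<Sum>b\<in>S. (of_nat (n b) - (if b = a then 1 else 0)) *s b) = th - a"
    unfolding n vector_sub_rdistrib sum_subtractf sum_delta_smult[OF finS a] by simp
  from indep_coeffs[OF indS this[unfolded c] a] have "of_nat (n a) - 1 = (of_nat (c a) :: complex)"
    by simp
  then have "of_nat (n a) = (of_nat (c a + 1) :: complex)" by (simp add: algebra_simps)
  then show ?thesis by (simp only: of_nat_eq_iff)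
qed

lemma n_one: "a \<in> S \<Longrightarrow> n a = 1"
proof -
  obtain e where "type_A_chain R D S e (card S)"
    using type_A_chain_exists[OF rs red base S_D S_ne typeA] .
  then interpret type_A_chain R D S e "card S" .
  show "a \<in> S \<Longrightarrow> n a = 1" using root_coeffs_one[OF thR n] n_ge1 by blast
qed

lemma th_sum: "th = (\<Sum>a\<in>S. a)"
  unfolding n by (rule sum.cong) (simp_all add: n_one)

lemma h_sum: "eta th + (\<Sum>a\<in>S. eta a) = (of_nat rl + 1) * hb"
  using h by (simp add: n_one)

lemma neg_th_notin: "- th \<notin> S"
proof
  assume a: "- th \<in> S"
  have "(\<Sum>b\<in>S. 1 *s b) = (\<Sum>b\<in>S. (if b = - th then -1 else 0) *s b)"
    unfolding sum_delta_smult[OF finS a] by (simp add: th_sum)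
  from indep_coeffs[OF indS this a] show False by simp
qed

lemma rotation:
  assumes "a0 \<in> S" shows "\<exists>v\<in>weyl Rl. v ` S = insert (- th) (S - {a0})"
proof -
  obtain e where "type_A_chain R D S e (card S)"
    using type_A_chain_exists[OF rs red base S_D S_ne typeA] .
  then interpret type_A_chain R D S e "card S" .
  obtain v where "v \<in> weyl S" "v ` S = insert (- (\<Sum>a\<in>S. a)) (S - {a0})"
    using coxeter_rotation[OF assms] by blast
  then show ?thesis using weyl_mono[OF _ S_Rl] by (intro bexI[of _ v]) (simp_all add: th_sum)
qed

definition mw :: "complex^'n \<Rightarrow> int" where "mw a = \<lfloor>Re (bil (w a) lam)\<rfloor>"
definition x :: "complex^'n \<Rightarrow> int" where "x a = int (xi (w a)) + mw a"

lemma mw: "a \<in> R \<Longrightarrow> bil (w a) lam = of_int (mw a)"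
proof -
  assume a: "a \<in> R"
  have "bil (w a) lam \<in> \<int>" using lam wR[OF a] unfolding coweights_def by blast
  then obtain z where "bil (w a) lam = of_int z" by (metis Ints_cases)
  then show ?thesis unfolding mw_def by simp
qed

lemma x_nonneg: "a \<in> S \<Longrightarrow> x a \<ge> 0"
proof -
  assume a: "a \<in> S"
  then have "real (xi (w a)) + Re (bil (w a) lam) \<ge> 0" using mj by blast
  then show ?thesis unfolding x_def mw[OF subsetD[OF SR a]] by simp
qed

lemma sum_mw: "bil (w th) lam = of_int (\<Sum>a\<in>S. mw a)"
proof -
  have "bil (w th) lam = (\<Sum>a\<in>S. bil (w a) lam)"
    unfolding th_sum weyl_sum[OF w] bil_sum_l ..
  also have "\<dots> = (\<Sum>a\<in>S. of_int (mw a))" by (rule sum.cong) (use SR mw in auto)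
  finally show ?thesis by simp
qed

lemma sum_xi: "(\<Sum>b\<in>w ` S. xi b) = (\<Sum>a\<in>S. xi (w a))"
  by (simp add: sum.reindex[OF inj_on_subset[OF w_inj subset_UNIV]])

lemma sum_x: "(\<Sum>a\<in>S. x a) = int (\<Sum>a\<in>S. xi (w a)) + (\<Sum>a\<in>S. mw a)"
  unfolding x_def sum.distrib of_nat_sum ..

lemma sum_x_le: "(\<Sum>a\<in>S. x a) \<le> int rl + 1"
proof -
  have "real (\<Sum>a\<in>S. xi (w a)) + real_of_int (\<Sum>a\<in>S. mw a) \<le> real rl + 1"
    using m0 unfolding sum_xi sum_mw by simp
  then show ?thesis unfolding sum_x by linarith
qed

lemma image_Hyp: "act_V hb u (- lam) ` Hyp eta hb (w ` S) xi
   = {y. \<forall>a\<in>S. bil (u (w a)) y = eta a - hb * of_int (x a)}"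
proof -
  have level: "bil (w a) z = eta (w a) - hb * of_nat (xi (w a))
      \<longleftrightarrow> bil (u (w a)) (act_V hb u (- lam) z) = eta a - hb * of_int (x a)" if "a \<in> S" for a z
  proof -
    have "bil (u (w a)) (act_V hb u (- lam) z) = bil (w a) z - hb * of_int (mw a)"
      unfolding act_V_def u_bil using mw SR that by (auto simp: bil_simps)
    then show ?thesis using eta_uw[of a] SR that
      by (auto simp: x_def eta_inv w algebra_simps)
  qed
  have "act_V hb u (- lam) (inv u y - hb *s (- lam)) = y" for y
    unfolding act_V_def by (simp add: surj_f_inv_f[OF bij_is_surj[OF weyl_bij[OF u goodR]]])
  then have "surj (act_V hb u (- lam))" by (rule surjI)
  then show ?thesis unfolding Hyp_def using level by auto
qed

lemma x_zero_pos: "a \<in> S \<Longrightarrow> x a = 0 \<Longrightarrow> u (w a) \<in> pos_roots R D"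
proof -
  assume a: "a \<in> S" and z: "x a = 0"
  have aR: "a \<in> R" using a SR by blast
  show ?thesis
  proof (cases "xi (w a) = 0")
    case True
    then have "mw a = 0" using z unfolding x_def by simp
    then have "aff_act hb u (- lam) (w a, 0) = (u (w a), 0)"
      unfolding aff_act_def using mw[OF aR] by (simp add: bil_simps)
    moreover have "w a \<in> pos_roots R D" using xi_zero a True by blast
    ultimately have "(u (w a), 0) \<in> Rhat_plus R D hb" using uhat by metis
    then show ?thesis using hb_nz unfolding Rhat_plus_def by auto
  next
    case False
    then have neg: "mw a < 0" using z unfolding x_def by simp
    show ?thesis
    proof (rule ccontr)
      assume "u (w a) \<notin> pos_roots R D"
      then have "- u (w a) \<in> pos_roots R D" by (rule root_pos_or_neg[OF rs base uR[OF wR[OF aR]]])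
      then have "Re (bil (- u (w a)) (u lam)) \<le> 0" using ulam unfolding antidominant_def by blast
      moreover have "bil (- u (w a)) (u lam) = - of_int (mw a)" unfolding bil_neg_l u_bil mw[OF aR] ..
      ultimately show False using neg by simp
    qed
  qed
qed

text \<open>When the levels sum to rl + 1, (u w th, u lam) \<ge> 1 forces u w (-th) to be positive.\<close>
lemma neg_th_pos:
  assumes "(\<Sum>a\<in>S. x a) = int rl + 1"
  shows "u (w (- th)) \<in> pos_roots R D"
proof -
  have "(\<Sum>a\<in>S. xi (w a)) \<le> rl" using xi_sum unfolding sum_xi .
  then have "(\<Sum>a\<in>S. mw a) \<ge> 1" using assms sum_x by linarith
  then have ge: "Re (bil (u (w th)) (u lam)) \<ge> 1" unfolding u_bil sum_mw by (simp del: of_int_sum)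
  have "u (w th) \<notin> pos_roots R D"
  proof
    assume "u (w th) \<in> pos_roots R D"
    then have "Re (bil (u (w th)) (u lam)) \<le> 0" using ulam unfolding antidominant_def by blast
    then show False using ge by simp
  qed
  from root_pos_or_neg[OF rs base uR[OF wR[OF thR]] this] show ?thesis
    by (simp add: weyl_neg[OF w] weyl_neg[OF u])
qed

definition xt :: "complex^'n \<Rightarrow> nat" where "xt b = nat (x (inv (u \<circ> w) b))"

lemma xt_uw: "xt (u (w a)) = nat (x a)"
  unfolding xt_def using uw_inj by (metis comp_apply inv_f_f)

lemma Hyp_xt: "A \<subseteq> S \<Longrightarrow>
  Hyp eta hb ((u \<circ> w) ` A) xt = {y. \<forall>a\<in>A. bil (u (w a)) y = eta a - hb * of_int (x a)}"
  unfolding Hyp_def using SR x_nonneg by (auto simp: xt_uw eta_uw subset_iff)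

lemma sum_xt: "A \<subseteq> S \<Longrightarrow> int (\<Sum>b\<in>(u \<circ> w) ` A. xt b) = (\<Sum>a\<in>A. x a)"
proof -
  assume A: "A \<subseteq> S"
  have "(\<Sum>b\<in>(u \<circ> w) ` A. xt b) = (\<Sum>a\<in>A. nat (x a))"
    using uw_inj by (subst sum.reindex) (auto simp: inj_on_def xt_uw)
  then have "int (\<Sum>b\<in>(u \<circ> w) ` A. xt b) = (\<Sum>a\<in>A. int (nat (x a)))"
    by (simp only: of_nat_sum)
  also have "\<dots> = (\<Sum>a\<in>A. x a)" using A x_nonneg by (intro sum.cong) auto
  finally show ?thesis .
qed

lemma xt_zero_pos: "A \<subseteq> S \<Longrightarrow> {b \<in> (u \<circ> w) ` A. xt b = 0} \<subseteq> pos_roots R D"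
  using x_nonneg x_zero_pos by (force simp: xt_uw)

lemma solution_identity:
  assumes "(\<Sum>a\<in>S. x a) \<le> int rl"
  shows "\<exists>v\<in>weyl Rl. \<exists>xit :: complex^'n \<Rightarrow> nat.
           (\<Sum>a\<in>(u \<circ> w \<circ> v) ` S. xit a) \<le> rl \<and>
           {a \<in> (u \<circ> w \<circ> v) ` S. xit a = 0} \<subseteq> pos_roots R D \<and>
           act_V hb u (- lam) ` Hyp eta hb (w ` S) xi = Hyp eta hb ((u \<circ> w \<circ> v) ` S) xit"
proof (intro bexI[OF _ weyl_id] exI[of _ xt] conjI)
  have "int (\<Sum>a\<in>(u \<circ> w) ` S. xt a) \<le> int rl" using sum_xt[OF subset_refl] assms by simp
  then show "(\<Sum>a\<in>(u \<circ> w \<circ> id) ` S. xt a) \<le> rl" unfolding comp_id by (simp only: of_nat_le_iff)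
  show "{a \<in> (u \<circ> w \<circ> id) ` S. xt a = 0} \<subseteq> pos_roots R D" using xt_zero_pos[OF subset_refl] by simp
  show "act_V hb u (- lam) ` Hyp eta hb (w ` S) xi = Hyp eta hb ((u \<circ> w \<circ> id) ` S) xt"
    unfolding image_Hyp using Hyp_xt[OF subset_refl] by simp
qed

text \<open>Case sum x = rl + 1: rotate a simple root a0 with x a0 \<ge> 1 into -th, and put 0
  on u w (-th).\<close>
lemma solution_rotated:
  assumes tot: "(\<Sum>a\<in>S. x a) = int rl + 1"
  shows "\<exists>v\<in>weyl Rl. \<exists>xit :: complex^'n \<Rightarrow> nat.
           (\<Sum>a\<in>(u \<circ> w \<circ> v) ` S. xit a) \<le> rl \<and>
           {a \<in> (u \<circ> w \<circ> v) ` S. xit a = 0} \<subseteq> pos_roots R D \<and>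
           act_V hb u (- lam) ` Hyp eta hb (w ` S) xi = Hyp eta hb ((u \<circ> w \<circ> v) ` S) xit"
proof -
  have "\<exists>a\<in>S. x a \<ge> 1"
  proof (rule ccontr)
    assume "\<not> (\<exists>a\<in>S. x a \<ge> 1)"
    then have "\<forall>a\<in>S. x a = 0" using x_nonneg by force
    then show False using tot by simp
  qed
  then obtain a0 where a0: "a0 \<in> S" "x a0 \<ge> 1" by blast
  obtain v where v: "v \<in> weyl Rl" "v ` S = insert (- th) (S - {a0})" using rotation[OF a0(1)] by blast
  define q where "q = u (w (- th))"
  let ?B = "(u \<circ> w) ` (S - {a0})"
  have img: "(u \<circ> w \<circ> v) ` S = insert q ?B" unfolding image_comp[symmetric] v(2) q_def by simp
  have qB: "q \<notin> ?B"
  proof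
    assume "q \<in> ?B"
    then obtain a where "a \<in> S - {a0}" "(u \<circ> w) (- th) = (u \<circ> w) a" unfolding q_def by auto
    then show False using neg_th_notin injD[OF uw_inj] by blast
  qed
  define xit where "xit b = (if b = q then 0 else xt b)" for b
  have rest: "(\<Sum>a\<in>S - {a0}. x a) \<le> int rl"
    using tot a0 sum.remove[OF finS a0(1), of x] by linarith
  show ?thesis
  proof (intro bexI[OF _ v(1)] exI[of _ xit] conjI)
    have "(\<Sum>b\<in>(u \<circ> w \<circ> v) ` S. xit b) = (\<Sum>b\<in>?B. xit b)"
      unfolding img using qB finS by (simp add: xit_def)
    also have "\<dots> = (\<Sum>b\<in>?B. xt b)" by (rule sum.cong) (use qB in \<open>auto simp: xit_def\<close>)
    finally have "(\<Sum>b\<in>(u \<circ> w \<circ> v) ` S. xit b) = (\<Sum>b\<in>?B. xt b)" .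
    moreover have "int (\<Sum>b\<in>?B. xt b) \<le> int rl" using sum_xt[of "S - {a0}"] rest by simp
    ultimately show "(\<Sum>b\<in>(u \<circ> w \<circ> v) ` S. xit b) \<le> rl" by (simp only: of_nat_le_iff)
    show "{b \<in> (u \<circ> w \<circ> v) ` S. xit b = 0} \<subseteq> pos_roots R D"
      using xt_zero_pos[of "S - {a0}"] neg_th_pos[OF tot] qB unfolding img q_def xit_def by auto
    have "eta q = eta (- th)" unfolding q_def by (rule eta_uw[OF root_neg[OF rs thR]])
    also have "\<dots> = eta th"
      using eta_inv refl_weyl[OF thR] thR refl_self[OF bspec[OF goodR thR]] by metis
    also have "\<dots> = - (\<Sum>a\<in>S. eta a) + (of_nat rl + 1) * hb" using h_sum by (simp add: algebra_simps)
    also have "(of_nat rl + 1 :: complex) = (\<Sum>a\<in>S. of_int (x a))"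
      using arg_cong[OF tot, of "of_int :: int \<Rightarrow> complex"] by simp
    finally have eta_q: "eta q = - (\<Sum>a\<in>S. eta a - hb * of_int (x a))"
      by (simp add: sum_subtractf sum_distrib_left mult.commute)
    have q_sum: "q = - (\<Sum>a\<in>S. u (w a))"
      unfolding q_def th_sum by (simp add: weyl_neg[OF w] weyl_neg[OF u] weyl_sum[OF w] weyl_sum[OF u])
    have "Hyp eta hb ?B xit = Hyp eta hb ?B xt"
      by (rule Hyp_cong) (use qB in \<open>auto simp: xit_def\<close>)
    then have "Hyp eta hb ((u \<circ> w \<circ> v) ` S) xit
        = {y. bil q y = eta q \<and> (\<forall>a\<in>S - {a0}. bil (u (w a)) y = eta a - hb * of_int (x a))}"
      unfolding img Hyp_insert using Hyp_xt[of "S - {a0}"] by (auto simp: xit_def)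
    also have "\<dots> = {y. \<forall>a\<in>S. bil (u (w a)) y = eta a - hb * of_int (x a)}"
      unfolding eta_q unfolding q_sum by (rule redundant_equation[OF finS a0(1)])
    finally show "act_V hb u (- lam) ` Hyp eta hb (w ` S) xi = Hyp eta hb ((u \<circ> w \<circ> v) ` S) xit"
      unfolding image_Hyp by (rule sym)
  qed
qed

lemma main:
  "\<exists>v\<in>weyl Rl. \<exists>xit :: complex^'n \<Rightarrow> nat.
     (\<Sum>a\<in>(u \<circ> w \<circ> v) ` S. xit a) \<le> rl \<and>
     {a \<in> (u \<circ> w \<circ> v) ` S. xit a = 0} \<subseteq> pos_roots R D \<and>
     act_V hb u (- lam) ` Hyp eta hb (w ` S) xi = Hyp eta hb ((u \<circ> w \<circ> v) ` S) xit"
proof (cases "(\<Sum>a\<in>S. x a) \<le> int rl")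
  case True then show ?thesis by (rule solution_identity)
next
  case False then show ?thesis using sum_x_le by (intro solution_rotated) linarith
qed

end

text \<open>The theorem is the locale result for S = S_0 \<inter> R_l.\<close>
theorem mainTheorem11:
  fixes R D S0 :: "(complex^'n) set"
    and hb :: complex
    and eta :: "complex^'n \<Rightarrow> complex"
    and m :: nat and Rc :: "nat \<Rightarrow> (complex^'n) set" and r :: "nat \<Rightarrow> nat"
    and u w :: "complex^'n \<Rightarrow> complex^'n" and lam :: "complex^'n"
    and l :: nat and th :: "complex^'n" and n :: "complex^'n \<Rightarrow> nat"
    and xi :: "complex^'n \<Rightarrow> nat"
  assumes rs: "root_system R" and red: "reduced R" and irr: "irreducible_roots R"
    and base: "is_base R D"
    and hb: "\<forall>q::rat. hb \<noteq> complex_of_real pi * \<i> * of_rat q"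
    and eta_inv: "\<forall>v\<in>weyl R. \<forall>a\<in>R. eta (v a) = eta a"
    and S0: "S0 \<subseteq> D"
    and comps: "irred_components (vec.span S0 \<inter> R) m Rc"
    and u: "u \<in> weyl R" and lam_dom: "lam \<in> dominant R D" and ulam: "u lam \<in> antidominant R D"
    and uhat: "\<forall>a\<in>pos_roots R D. aff_act hb u (- lam) (a, 0) \<in> Rhat_plus R D hb"
    and l: "l \<in> {1..m}"
    and typeA: "type_A (S0 \<inter> Rc l) (card (S0 \<inter> Rc l))"
    and th: "highest_root (Rc l) (S0 \<inter> Rc l) th"
    and n: "th = (\<Sum>a\<in>S0 \<inter> Rc l. of_nat (n a) *s a)"
    and h: "eta th + (\<Sum>a\<in>S0 \<inter> Rc l. of_nat (n a) * eta a) = (of_nat (r l) + 1) * hb"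
    and w: "w \<in> weyl R"
    and xi: "xi \<in> Xi R D S0 m Rc r w"
    and m0: "real (\<Sum>a\<in>w ` (S0 \<inter> Rc l). xi a) + Re (bil (w th) lam) \<le> real (r l) + 1"
    and mj: "\<forall>a\<in>S0 \<inter> Rc l. real (xi (w a)) + Re (bil (w a) lam) \<ge> 0"
  shows "\<exists>v\<in>weyl (Rc l). \<exists>xit :: complex^'n \<Rightarrow> nat.
           (\<Sum>a\<in>(u \<circ> w \<circ> v) ` (S0 \<inter> Rc l). xit a) \<le> r l \<and>
           {a \<in> (u \<circ> w \<circ> v) ` (S0 \<inter> Rc l). xit a = 0} \<subseteq> pos_roots R D \<and>
           act_V hb u (- lam) ` Hyp eta hb (w ` (S0 \<inter> Rc l)) xi
             = Hyp eta hb ((u \<circ> w \<circ> v) ` (S0 \<inter> Rc l)) xit"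
proof -
  have hb_nz: "hb \<noteq> 0" using hb[rule_format, of 0] by simp
  have lam: "lam \<in> coweights R" using lam_dom unfolding dominant_def by blast
  have Rl_R: "Rc l \<subseteq> R" using comps l unfolding irred_components_def by blast
  have xi_l: "{b \<in> w ` (S0 \<inter> Rc l). xi b = 0} \<subseteq> pos_roots R D"
    "(\<Sum>b\<in>w ` (S0 \<inter> Rc l). xi b) \<le> r l"
    using xi l unfolding Xi_def by auto
  interpret type_A_component R D "S0 \<inter> Rc l" "Rc l" hb eta "r l" u w lam th n xi
    using rs red base S0 Rl_R hb_nz eta_inv u w lam ulam uhat typeA th n h xi_l m0 mj
    by unfold_locales auto
  show ?thesis by (rule main)
qed

end
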